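(* Let $z,a,b,c,n,m,p,q,r$ be positive integers and $$M=\begin{pmatrix} z & a & b\\ c & n & m\\ p & q & r\end{pmatrix}.$$ If $z\geq 1$, $n>ac$, $r>bp$, $m\geq bc$ and $q\geq ap$, then $\mathrm{Cat}(M)\neq\emptyset$.
   Context: For an $n\times n$ matrix $M=(m_{ij})$ with entries in the natural numbers, $\mathrm{Cat}(M)$ denotes the collection of categories $A$ with exactly $n$ distinct objects $x_1,\dots,x_n$ such that $|A(x_i,x_j)|=m_{ij}$ for all $i,j$, where $A(x_i,x_j)$ is the set of morphisms from $x_i$ to $x_j$. The paper considers matrices with strictly positive entries. *)

theory Defs
  imports Main
begin

text \<open>A (small) category with objects 0,...,n-1 (the objects x_1..x_n of the paper,
  indexed from 0), given by hom-sets hom i j, composition cmp i j k g f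
  (g after f, for f : i -> j and g : j -> k) and identities ident i.\<close>

definition is_category_on ::
  "nat \<Rightarrow> (nat \<Rightarrow> nat \<Rightarrow> 'm set) \<Rightarrow> (nat \<Rightarrow> nat \<Rightarrow> nat \<Rightarrow> 'm \<Rightarrow> 'm \<Rightarrow> 'm) \<Rightarrow> (nat \<Rightarrow> 'm) \<Rightarrow> bool"
where
  "is_category_on n hom cmp ident \<longleftrightarrow>
     (\<forall>i<n. ident i \<in> hom i i) \<and>
     (\<forall>i<n. \<forall>j<n. \<forall>k<n. \<forall>f\<in>hom i j. \<forall>g\<in>hom j k. cmp i j k g f \<in> hom i k) \<and>
     (\<forall>i<n. \<forall>j<n. \<forall>f\<in>hom i j. cmp i j j (ident j) f = f \<and> cmp i i j f (ident i) = f) \<and>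
     (\<forall>i<n. \<forall>j<n. \<forall>k<n. \<forall>l<n. \<forall>f\<in>hom i j. \<forall>g\<in>hom j k. \<forall>h\<in>hom k l.
        cmp i k l h (cmp i j k g f) = cmp i j l (cmp j k l h g) f)"

text \<open>Morphisms are represented by natural numbers; any category with finite hom-sets
  is isomorphic to such a one.\<close>

definition Cat_nonempty :: "nat \<Rightarrow> (nat \<Rightarrow> nat \<Rightarrow> nat) \<Rightarrow> bool" where
  "Cat_nonempty n M \<longleftrightarrow>
     (\<exists>(hom :: nat \<Rightarrow> nat \<Rightarrow> nat set) cmp ident.
        is_category_on n hom cmp ident \<and>
        (\<forall>i<n. \<forall>j<n. finite (hom i j) \<and> card (hom i j) = M i j))"

definition mat3 :: "nat \<Rightarrow> nat \<Rightarrow> nat \<Rightarrow> nat \<Rightarrow> nat \<Rightarrow> nat \<Rightarrow> nat \<Rightarrow> nat \<Rightarrow> nat \<Rightarrow> nat \<Rightarrow> nat \<Rightarrow> nat" where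
  "mat3 z a b c n m p q r = (\<lambda>i j. [[z, a, b], [c, n, m], [p, q, r]] ! i ! j)"

end

theory Submission
  imports Defs "HOL-Library.Countable"
begin

text \<open>Choose positive integers \<open>s\<^sub>i, t\<^sub>j\<close> and let the non-identity morphisms \<open>x\<^sub>i \<rightarrow> x\<^sub>j\<close> contain
  the pairs \<open>(u, v)\<close> with \<open>u < s\<^sub>i\<close>, \<open>v < t\<^sub>j\<close>, composed as in a rectangular band:
  \<open>(u', v') \<circ> (u, v) = (u, v')\<close>, which is associative. The remaining
  \<open>M\<^sub>i\<^sub>j - s\<^sub>i t\<^sub>j - \<delta>\<^sub>i\<^sub>j\<close> morphisms are extra elements composing like \<open>(0, 0)\<close>, and a formal
  identity is adjoined. This works as soon as \<open>M\<^sub>i\<^sub>j \<ge> s\<^sub>i t\<^sub>j + \<delta>\<^sub>i\<^sub>j\<close>. An object with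
  \<open>s\<^sub>i = t\<^sub>i = 1\<close> may instead use \<open>(0, 0)\<close> as its identity, provided its row and column of
  \<open>M\<close> are exactly \<open>t\<close> and \<open>s\<close>. For the theorem take \<open>s = (1, c, p)\<close> and \<open>t = (1, a, b)\<close>:
  the hypotheses are exactly these inequalities, and when \<open>z = 1\<close> the first object is of
  the second kind.\<close>

lemma Cat_nonempty_if_category:
  fixes hom :: "nat \<Rightarrow> nat \<Rightarrow> 'm :: countable set"
  assumes "is_category_on N hom cmp ident"
    and "\<And>i j. i < N \<Longrightarrow> j < N \<Longrightarrow> finite (hom i j) \<and> card (hom i j) = M i j"
  shows "Cat_nonempty N M"
proof -
  have "is_category_on N (\<lambda>i j. to_nat ` hom i j)
      (\<lambda>i j k g f. to_nat (cmp i j k (from_nat g) (from_nat f))) (\<lambda>i. to_nat (ident i))"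
    using assms(1) unfolding is_category_on_def by auto
  moreover have "finite (to_nat ` hom i j) \<and> card (to_nat ` hom i j) = M i j"
    if "i < N" "j < N" for i j
    using assms(2)[OF that] by (simp add: card_image inj_on_def)
  ultimately show ?thesis
    unfolding Cat_nonempty_def by blast
qed

datatype band_mor = Ident | Band nat nat | Extra nat

instance band_mor :: countable by countable_datatype

fun band_fst :: "band_mor \<Rightarrow> nat" where
  "band_fst (Band u v) = u"
| "band_fst _ = 0"

fun band_snd :: "band_mor \<Rightarrow> nat" where
  "band_snd (Band u v) = v"
| "band_snd _ = 0"

definition band_comp :: "band_mor \<Rightarrow> band_mor \<Rightarrow> band_mor" where
  "band_comp g f = (if f = Ident then g else if g = Ident then f else Band (band_fst f) (band_snd g))"

lemma band_comp_assoc: "band_comp h (band_comp g f) = band_comp (band_comp h g) f"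
  by (cases f; cases g; cases h) (auto simp: band_comp_def)

locale band_category =
  fixes N :: nat and M :: "nat \<Rightarrow> nat \<Rightarrow> nat" and s t :: "nat \<Rightarrow> nat" and D :: "nat set"
  assumes pos: "\<And>i. i < N \<Longrightarrow> 0 < s i \<and> 0 < t i"
    and size: "\<And>i j. i < N \<Longrightarrow> j < N \<Longrightarrow> s i * t j + of_bool (i = j \<and> i \<in> D) \<le> M i j"
    and not_in_D: "\<And>i k. i < N \<Longrightarrow> i \<notin> D \<Longrightarrow> k < N \<Longrightarrow>
      s i = 1 \<and> t i = 1 \<and> M k i = s k \<and> M i k = t k"
begin

definition extra_count :: "nat \<Rightarrow> nat \<Rightarrow> nat" where
  "extra_count i j = M i j - s i * t j - of_bool (i = j \<and> i \<in> D)"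

definition hom :: "nat \<Rightarrow> nat \<Rightarrow> band_mor set" where
  "hom i j = (\<lambda>(u, v). Band u v) ` ({..<s i} \<times> {..<t j}) \<union> Extra ` {..<extra_count i j}
    \<union> (if i = j \<and> i \<in> D then {Ident} else {})"

definition ident :: "nat \<Rightarrow> band_mor" where
  "ident i = (if i \<in> D then Ident else Band 0 0)"

lemma card_hom:
  assumes "i < N" "j < N"
  shows "finite (hom i j) \<and> card (hom i j) = M i j"
proof -
  let ?A = "(\<lambda>(u, v). Band u v) ` ({..<s i} \<times> {..<t j})"
  let ?B = "Extra ` {..<extra_count i j}"
  let ?C = "if i = j \<and> i \<in> D then {Ident} else {}"
  have "card ?A = s i * t j"
    by (subst card_image) (auto simp: inj_on_def)
  moreover have "card ?B = extra_count i j"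
    by (subst card_image) (auto simp: inj_on_def)
  moreover have "card ?C = of_bool (i = j \<and> i \<in> D)"
    by simp
  moreover have "card (?A \<union> ?B \<union> ?C) = card (?A \<union> ?B) + card ?C"
    by (rule card_Un_disjoint) auto
  moreover have "card (?A \<union> ?B) = card ?A + card ?B"
    by (rule card_Un_disjoint) auto
  ultimately show ?thesis
    using size[OF assms] by (simp add: hom_def extra_count_def)
qed

lemma Ident_in_hom: "Ident \<in> hom i j \<Longrightarrow> i = j \<and> i \<in> D"
  by (auto simp: hom_def split: if_splits)

lemma Band_in_hom: "u < s i \<Longrightarrow> v < t j \<Longrightarrow> Band u v \<in> hom i j"
  by (auto simp: hom_def)

lemma band_fst_less: "f \<in> hom i j \<Longrightarrow> i < N \<Longrightarrow> band_fst f < s i"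
  using pos by (auto simp: hom_def split: if_splits)

lemma band_snd_less: "f \<in> hom i j \<Longrightarrow> j < N \<Longrightarrow> band_snd f < t j"
  using pos by (auto simp: hom_def split: if_splits)

lemma hom_into_not_in_D:
  assumes "f \<in> hom i j" "i < N" "j < N" "j \<notin> D"
  shows "f = Band (band_fst f) 0"
  using assms not_in_D[OF \<open>j < N\<close> \<open>j \<notin> D\<close> \<open>i < N\<close>]
  by (auto simp: hom_def extra_count_def split: if_splits)

lemma hom_from_not_in_D:
  assumes "f \<in> hom i j" "i < N" "j < N" "i \<notin> D"
  shows "f = Band 0 (band_snd f)"
  using assms not_in_D[OF \<open>i < N\<close> \<open>i \<notin> D\<close> \<open>j < N\<close>]
  by (auto simp: hom_def extra_count_def split: if_splits)

lemma band_comp_in_hom: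
  assumes "i < N" "k < N" "f \<in> hom i j" "g \<in> hom j k"
  shows "band_comp g f \<in> hom i k"
proof -
  consider "f = Ident" | "g = Ident" | "f \<noteq> Ident" "g \<noteq> Ident"
    by blast
  then show ?thesis
  proof cases
    case 1
    then show ?thesis
      using assms Ident_in_hom by (auto simp: band_comp_def)
  next
    case 2
    then show ?thesis
      using assms Ident_in_hom by (auto simp: band_comp_def)
  next
    case 3
    then show ?thesis
      using assms band_fst_less band_snd_less by (simp add: band_comp_def Band_in_hom)
  qed
qed

lemma band_comp_ident_left:
  assumes "f \<in> hom i j" "i < N" "j < N"
  shows "band_comp (ident j) f = f"
proof (cases "j \<in> D")
  case False
  then have "f \<noteq> Ident"
    using assms(1) Ident_in_hom by blast
  then show ?thesis
    using False hom_into_not_in_D[OF assms False] by (simp add: band_comp_def ident_def)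
qed (simp add: band_comp_def ident_def)

lemma band_comp_ident_right:
  assumes "f \<in> hom i j" "i < N" "j < N"
  shows "band_comp f (ident i) = f"
proof (cases "i \<in> D")
  case False
  then have "f \<noteq> Ident"
    using assms(1) Ident_in_hom by blast
  then show ?thesis
    using False hom_from_not_in_D[OF assms False] by (simp add: band_comp_def ident_def)
qed (simp add: band_comp_def ident_def)

lemma ident_in_hom: "i < N \<Longrightarrow> ident i \<in> hom i i"
  using pos[of i] by (auto simp: ident_def hom_def)

lemma is_category: "is_category_on N hom (\<lambda>_ _ _. band_comp) ident"
  unfolding is_category_on_def
  by (simp add: ident_in_hom band_comp_in_hom band_comp_ident_left band_comp_ident_right
      band_comp_assoc)

lemma Cat_nonempty: "Cat_nonempty N M"
  using Cat_nonempty_if_category[OF is_category card_hom] .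

end

theorem mainTheorem5:
  fixes z a b c n m p q r :: nat
  assumes "z > 0" "a > 0" "b > 0" "c > 0" "n > 0" "m > 0" "p > 0" "q > 0" "r > 0"
    and "z \<ge> 1" "n > a * c" "r > b * p" "m \<ge> b * c" "q \<ge> a * p"
  shows "Cat_nonempty 3 (mat3 z a b c n m p q r)"
proof (rule band_category.Cat_nonempty)
  let ?s = "\<lambda>i :: nat. if i = 0 then 1 else if i = 1 then c else p"
  let ?t = "\<lambda>i :: nat. if i = 0 then 1 else if i = 1 then a else b"
  let ?D = "if z = 1 then {1, 2} else {0, 1, 2 :: nat}"
  show "band_category 3 (mat3 z a b c n m p q r) ?s ?t ?D"
  proof
    show "0 < ?s i \<and> 0 < ?t i" for i
      using assms by simp
    show "?s i * ?t j + of_bool (i = j \<and> i \<in> ?D) \<le> mat3 z a b c n m p q r i j"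
      if "i < 3" "j < 3" for i j
      using that assms
      by (auto simp: less_Suc_eq numeral_3_eq_3 mat3_def numeral_2_eq_2 mult.commute)
    show "?s i = 1 \<and> ?t i = 1 \<and> mat3 z a b c n m p q r k i = ?s k \<and> mat3 z a b c n m p q r i k = ?t k"
      if "i < 3" "i \<notin> ?D" "k < 3" for i k
      using that assms
      by (auto simp: less_Suc_eq numeral_3_eq_3 mat3_def numeral_2_eq_2 split: if_splits)
  qed
qed

end
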